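(* Let $s=\tfrac12$, $\lambda\in\mathbb{C}$ and $k\in\mathbb{Z}$. Every odd superderivation of $\mathfrak{L}^{1/2}_\lambda$ of degree $k+\tfrac12$ is inner; more precisely, it equals $\mathrm{ad}(aG_{k+1/2}+bH_{k+1/2})$ for some $a,b\in\mathbb{C}$.
   Context: For $s\in\{0,\tfrac12\}$ and $\lambda\in\mathbb{C}$, $\mathfrak{L}^s_\lambda$ is the complex Lie superalgebra with basis $\{L_m,I_m,G_p,H_p : m\in\mathbb{Z},\ p\in s+\mathbb{Z}\}$, even part spanned by the $L_m,I_m$, odd part spanned by the $G_p,H_p$, and brackets $[L_m,L_n]=(m-n)L_{m+n}$, $[L_m,I_n]=(m-n)I_{m+n}$, $[L_m,H_p]=(\tfrac m2-p)H_{m+p}$, $[L_m,G_p]=(\tfrac m2-p)G_{m+p}+\lambda(m+1)H_{m+p}$, $[I_m,G_p]=(m-2p)H_{m+p}$, $[G_p,G_q]=I_{p+q}$, plus those given by super-antisymmetry $[y,x]=-(-1)^{|x||y|}[x,y]$; all other brackets of basis elements are zero. $\mathfrak{L}_r$ ($r\in\tfrac12\mathbb{Z}$) is spanned by basis elements of index $r$. A superderivation of parity $a$ is a linear map $D$ shifting parity by $a$ with $D([x,y])=[D(x),y]+(-1)^{a|x|}[x,D(y)]$ for homogeneous $x,y$; it has degree $r$ if $D(\mathfrak{L}_q)\subset\mathfrak{L}_{q+r}$. $\mathrm{ad}\,x(y)=[x,y]$. *)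

theory Defs
  imports Complex_Main "HOL-Library.Function_Algebras"
begin

text \<open>Basis elements: L m, I m (even, m :: int),
  G j, H j (odd) where G j stands for G_{j+1/2} and H j for H_{j+1/2}.
  Elements of the algebra are finitely supported coefficient functions bas => complex.\<close>

datatype bas = L int | I int | G int | H int

definition sc :: "complex \<Rightarrow> (bas \<Rightarrow> complex) \<Rightarrow> bas \<Rightarrow> complex" (infixr "\<cdot>" 75) where
  "c \<cdot> x = (\<lambda>b. c * x b)"

definition supp :: "(bas \<Rightarrow> complex) \<Rightarrow> bas set" where
  "supp x = {b. x b \<noteq> 0}"

definition Lspace :: "(bas \<Rightarrow> complex) set" where
  "Lspace = {x. finite (supp x)}"

definition e :: "bas \<Rightarrow> bas \<Rightarrow> complex" where
  "e b = (\<lambda>c. if c = b then 1 else 0)"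

fun odd_bas :: "bas \<Rightarrow> bool" where
  "odd_bas (L m) = False"
| "odd_bas (I m) = False"
| "odd_bas (G j) = True"
| "odd_bas (H j) = True"

fun deg :: "bas \<Rightarrow> real" where
  "deg (L m) = of_int m"
| "deg (I m) = of_int m"
| "deg (G j) = of_int j + 1/2"
| "deg (H j) = of_int j + 1/2"

text \<open>Half-integer p = j + 1/2, so e.g. m/2 - p = m/2 - j - 1/2 and m - 2p = m - 2j - 1,
  G_p + G_q indices: p + q = j + k + 1.\<close>
fun brb :: "complex \<Rightarrow> bas \<Rightarrow> bas \<Rightarrow> bas \<Rightarrow> complex" where
  "brb lam (L m) (L n) = (of_int (m - n) :: complex) \<cdot> e (L (m + n))"
| "brb lam (L m) (I n) = (of_int (m - n) :: complex) \<cdot> e (I (m + n))"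
| "brb lam (I n) (L m) = - ((of_int (m - n) :: complex) \<cdot> e (I (m + n)))"
| "brb lam (L m) (H j) = (of_int m / 2 - of_int j - 1/2 :: complex) \<cdot> e (H (m + j))"
| "brb lam (H j) (L m) = - ((of_int m / 2 - of_int j - 1/2 :: complex) \<cdot> e (H (m + j)))"
| "brb lam (L m) (G j) = (of_int m / 2 - of_int j - 1/2 :: complex) \<cdot> e (G (m + j))
                          + (lam * of_int (m + 1)) \<cdot> e (H (m + j))"
| "brb lam (G j) (L m) = - ((of_int m / 2 - of_int j - 1/2 :: complex) \<cdot> e (G (m + j))
                          + (lam * of_int (m + 1)) \<cdot> e (H (m + j)))"
| "brb lam (I m) (G j) = (of_int (m - 2 * j - 1) :: complex) \<cdot> e (H (m + j))"
| "brb lam (G j) (I m) = - ((of_int (m - 2 * j - 1) :: complex) \<cdot> e (H (m + j)))"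
| "brb lam (G j) (G k) = e (I (j + k + 1))"
| "brb lam _ _ = 0"

definition brk :: "complex \<Rightarrow> (bas \<Rightarrow> complex) \<Rightarrow> (bas \<Rightarrow> complex) \<Rightarrow> bas \<Rightarrow> complex" where
  "brk lam x y = (\<Sum>a\<in>supp x. \<Sum>b\<in>supp y. (x a * y b) \<cdot> brb lam a b)"

definition homog :: "bool \<Rightarrow> (bas \<Rightarrow> complex) \<Rightarrow> bool" where
  "homog par x \<longleftrightarrow> x \<in> Lspace \<and> (\<forall>b\<in>supp x. odd_bas b = par)"

definition graded :: "real \<Rightarrow> (bas \<Rightarrow> complex) \<Rightarrow> bool" where
  "graded q x \<longleftrightarrow> x \<in> Lspace \<and> (\<forall>b\<in>supp x. deg b = q)"

text \<open>Odd superderivation of L^{1/2}_lambda (parity a = 1, so the sign is (-1)^{|x|}).\<close>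
definition odd_superder :: "complex \<Rightarrow> ((bas \<Rightarrow> complex) \<Rightarrow> (bas \<Rightarrow> complex)) \<Rightarrow> bool" where
  "odd_superder lam D \<longleftrightarrow>
     (\<forall>x\<in>Lspace. D x \<in> Lspace) \<and>
     (\<forall>x\<in>Lspace. \<forall>y\<in>Lspace. D (x + y) = D x + D y) \<and>
     (\<forall>c. \<forall>x\<in>Lspace. D (c \<cdot> x) = c \<cdot> D x) \<and>
     (\<forall>par x. homog par x \<longrightarrow> homog (\<not> par) (D x)) \<and>
     (\<forall>px py x y. homog px x \<longrightarrow> homog py y \<longrightarrow>
        D (brk lam x y) = brk lam (D x) y + (if px then -1 else 1) \<cdot> brk lam x (D y))"

definition has_degree :: "real \<Rightarrow> ((bas \<Rightarrow> complex) \<Rightarrow> (bas \<Rightarrow> complex)) \<Rightarrow> bool" where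
  "has_degree r D \<longleftrightarrow> (\<forall>q x. graded q x \<longrightarrow> graded (q + r) (D x))"

end

theory Submission
  imports Defs
begin

text \<open>Since \<open>D\<close> has degree \<open>k + 1/2\<close>, it sends every basis vector to a combination of the
  two basis vectors of the shifted degree, which leaves eight families of unknown coefficients.
  The superderivation rule applied to \<open>[L\<^sub>0, H\<^sub>j]\<close>, \<open>[L\<^sub>0, G\<^sub>j]\<close>, \<open>[L\<^sub>m, G\<^sub>0]\<close>,
  \<open>[G\<^sub>0, G\<^sub>n\<^sub>-\<^sub>1]\<close> and \<open>[L\<^sub>m, L\<^sub>0]\<close> expresses all of them through the two coefficients
  of \<open>D L\<^sub>0\<close>; these relations can be solved because \<open>k + 1/2 \<noteq> 0\<close>. The resulting values are
  exactly those of \<open>ad (a G\<^sub>k\<^sub>+\<^sub>1\<^sub>/\<^sub>2 + b H\<^sub>k\<^sub>+\<^sub>1\<^sub>/\<^sub>2)\<close> on basis vectors, and two linear maps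
  that agree on the basis agree everywhere.\<close>

section \<open>Finitely supported coefficient functions\<close>

lemma sum_fun_apply: "(\<Sum>c\<in>S. f c) d = (\<Sum>c\<in>S. f c d)"
  for f :: "'a \<Rightarrow> bas \<Rightarrow> complex"
  by (induct S rule: infinite_finite_induct) auto

lemma sc_apply [simp]: "(c \<cdot> x) d = c * x d"
  by (simp add: sc_def)

lemma sc_zero_left [simp]: "(0::complex) \<cdot> x = 0"
  by (rule ext) simp

lemma e_apply [simp]: "e b d = (if d = b then 1 else 0)"
  by (simp add: e_def)

lemma supp_e [simp]: "supp (e b) = {b}"
  by (auto simp: supp_def)

lemma supp_add: "supp (x + y) \<subseteq> supp x \<union> supp y"
  by (auto simp: supp_def)

lemma supp_sc: "supp (c \<cdot> x) \<subseteq> supp x"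
  by (auto simp: supp_def)

lemma e_Lspace [simp]: "e b \<in> Lspace"
  by (simp add: Lspace_def)

lemma Lspace_zero [simp]: "0 \<in> Lspace"
  by (simp add: Lspace_def supp_def)

lemma Lspace_add [simp]: "x \<in> Lspace \<Longrightarrow> y \<in> Lspace \<Longrightarrow> x + y \<in> Lspace"
  unfolding Lspace_def using supp_add[of x y] by (auto intro: finite_subset)

lemma Lspace_sc [simp]: "x \<in> Lspace \<Longrightarrow> c \<cdot> x \<in> Lspace"
  unfolding Lspace_def using supp_sc[of c x] by (auto intro: finite_subset)

lemma Lspace_sum_e: "finite S \<Longrightarrow> (\<Sum>c\<in>S. g c \<cdot> e c) \<in> Lspace"
proof (induct S rule: finite_induct)
  case empty
  show ?case by (simp only: sum.empty Lspace_zero)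
next
  case (insert c S)
  show ?case
    unfolding sum.insert[OF insert(1,2)] by (rule Lspace_add[OF Lspace_sc[OF e_Lspace] insert(3)])
qed

lemma Lspace_eq_sum_e:
  assumes "x \<in> Lspace"
  shows "x = (\<Sum>c\<in>supp x. x c \<cdot> e c)"
proof
  fix d
  have "(\<Sum>c\<in>supp x. x c \<cdot> e c) d = (\<Sum>c\<in>supp x. if d = c then x c else 0)"
    by (simp add: sum_fun_apply if_distrib cong: if_cong)
  also have "\<dots> = x d"
    using assms by (simp add: Lspace_def supp_def)
  finally show "x d = (\<Sum>c\<in>supp x. x c \<cdot> e c) d" by simp
qed

lemma linear_sum_e:
  assumes add: "\<And>x y. x \<in> Lspace \<Longrightarrow> y \<in> Lspace \<Longrightarrow> F (x + y) = F x + F y"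
    and sc: "\<And>c x. x \<in> Lspace \<Longrightarrow> F (c \<cdot> x) = c \<cdot> F x"
    and "finite S"
  shows "F (\<Sum>c\<in>S. g c \<cdot> e c) = (\<Sum>c\<in>S. g c \<cdot> F (e c))"
  using \<open>finite S\<close>
proof (induct S rule: finite_induct)
  case empty
  have "F 0 = F (0 \<cdot> 0)" by (simp only: sc_zero_left)
  also have "\<dots> = 0" using sc[OF Lspace_zero, of 0] by (simp only: sc_zero_left)
  finally show ?case by (simp only: sum.empty)
next
  case (insert c S)
  have "F (\<Sum>c\<in>insert c S. g c \<cdot> e c) = F (g c \<cdot> e c + (\<Sum>c\<in>S. g c \<cdot> e c))"
    unfolding sum.insert[OF insert(1,2)] ..
  also have "\<dots> = g c \<cdot> F (e c) + F (\<Sum>c\<in>S. g c \<cdot> e c)"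
    by (simp only: add[OF Lspace_sc[OF e_Lspace] Lspace_sum_e[OF insert(1)]] sc[OF e_Lspace])
  also have "\<dots> = (\<Sum>c\<in>insert c S. g c \<cdot> F (e c))"
    unfolding sum.insert[OF insert(1,2)] insert(3) ..
  finally show ?case .
qed

lemma linear_eq_on_Lspace_if_eq_on_basis:
  assumes F_add: "\<And>x y. x \<in> Lspace \<Longrightarrow> y \<in> Lspace \<Longrightarrow> F (x + y) = F x + F y"
    and F_sc: "\<And>c x. x \<in> Lspace \<Longrightarrow> F (c \<cdot> x) = c \<cdot> F x"
    and F'_add: "\<And>x y. x \<in> Lspace \<Longrightarrow> y \<in> Lspace \<Longrightarrow> F' (x + y) = F' x + F' y"
    and F'_sc: "\<And>c x. x \<in> Lspace \<Longrightarrow> F' (c \<cdot> x) = c \<cdot> F' x"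
    and basis: "\<And>b. F (e b) = F' (e b)"
    and x: "x \<in> Lspace"
  shows "F x = F' x"
proof -
  have fin: "finite (supp x)"
    using x by (simp add: Lspace_def)
  have "F x = (\<Sum>c\<in>supp x. x c \<cdot> F (e c))"
    by (subst Lspace_eq_sum_e[OF x]) (rule linear_sum_e[OF F_add F_sc fin])
  also have "\<dots> = (\<Sum>c\<in>supp x. x c \<cdot> F' (e c))"
    by (simp only: basis)
  also have "\<dots> = F' x"
    by (subst (2) Lspace_eq_sum_e[OF x]) (rule linear_sum_e[OF F'_add F'_sc fin, symmetric])
  finally show ?thesis .
qed

section \<open>Bilinearity of the bracket\<close>

lemma brk_eq_sum:
  assumes "finite A" "supp x \<subseteq> A" "finite B" "supp y \<subseteq> B"
  shows "brk lam x y d = (\<Sum>a\<in>A. \<Sum>b\<in>B. x a * y b * brb lam a b d)"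
proof -
  have "brk lam x y d = (\<Sum>a\<in>supp x. \<Sum>b\<in>supp y. x a * y b * brb lam a b d)"
    unfolding brk_def by (simp add: sum_fun_apply)
  also have "\<dots> = (\<Sum>a\<in>A. \<Sum>b\<in>supp y. x a * y b * brb lam a b d)"
    by (rule sum.mono_neutral_left) (use assms in \<open>auto simp: supp_def\<close>)
  also have "\<dots> = (\<Sum>a\<in>A. \<Sum>b\<in>B. x a * y b * brb lam a b d)"
    by (rule sum.cong[OF refl], rule sum.mono_neutral_left) (use assms in \<open>auto simp: supp_def\<close>)
  finally show ?thesis .
qed

lemma brk_add_left:
  assumes "x \<in> Lspace" "y \<in> Lspace" "z \<in> Lspace"
  shows "brk lam (x + y) z = brk lam x z + brk lam y z"
proof
  fix d
  have fin: "finite (supp x \<union> supp y)" "finite (supp z)"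
    using assms by (auto simp: Lspace_def)
  show "brk lam (x + y) z d = (brk lam x z + brk lam y z) d"
    using brk_eq_sum[OF fin(1) supp_add fin(2) order_refl]
      brk_eq_sum[OF fin(1) _ fin(2) order_refl, where x=x] brk_eq_sum[OF fin(1) _ fin(2) order_refl, where x=y]
    by (simp add: sum.distrib[symmetric] algebra_simps)
qed

lemma brk_add_right:
  assumes "x \<in> Lspace" "y \<in> Lspace" "z \<in> Lspace"
  shows "brk lam z (x + y) = brk lam z x + brk lam z y"
proof
  fix d
  have fin: "finite (supp x \<union> supp y)" "finite (supp z)"
    using assms by (auto simp: Lspace_def)
  show "brk lam z (x + y) d = (brk lam z x + brk lam z y) d"
    using brk_eq_sum[OF fin(2) order_refl fin(1) supp_add]
      brk_eq_sum[OF fin(2) order_refl fin(1), where y=x] brk_eq_sum[OF fin(2) order_refl fin(1), where y=y]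
    by (simp add: sum.distrib[symmetric] algebra_simps)
qed

lemma brk_sc_left:
  assumes "x \<in> Lspace" "z \<in> Lspace"
  shows "brk lam (c \<cdot> x) z = c \<cdot> brk lam x z"
proof
  fix d
  have fin: "finite (supp x)" "finite (supp z)"
    using assms by (auto simp: Lspace_def)
  show "brk lam (c \<cdot> x) z d = (c \<cdot> brk lam x z) d"
    using brk_eq_sum[OF fin(1) supp_sc fin(2) order_refl] brk_eq_sum[OF fin(1) order_refl fin(2) order_refl]
    by (simp add: sum_distrib_left algebra_simps)
qed

lemma brk_sc_right:
  assumes "x \<in> Lspace" "z \<in> Lspace"
  shows "brk lam z (c \<cdot> x) = c \<cdot> brk lam z x"
proof
  fix d
  have fin: "finite (supp x)" "finite (supp z)"
    using assms by (auto simp: Lspace_def)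
  show "brk lam z (c \<cdot> x) d = (c \<cdot> brk lam z x) d"
    using brk_eq_sum[OF fin(2) order_refl fin(1) supp_sc] brk_eq_sum[OF fin(2) order_refl fin(1) order_refl]
    by (simp add: sum_distrib_left algebra_simps)
qed

lemma brk_e_e [simp]: "brk lam (e a) (e b) = brb lam a b"
  by (rule ext) (simp add: brk_eq_sum[of "{a}" _ "{b}"])

section \<open>Graded pieces\<close>

lemma of_int_plus_half_neq_of_int: "of_int j + 1/2 \<noteq> (of_int n :: real)"
proof
  assume "of_int j + 1/2 = (of_int n :: real)"
  then have "(of_int (2*j+1) :: real) = of_int (2*n)" by simp
  then have "2*j+1 = 2*n" by (simp only: of_int_eq_iff)
  then show False by presburger
qed

lemma graded_e: "graded (deg b) (e b)"
  by (simp add: graded_def)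

lemma graded_of_int_eq:
  assumes "graded (of_int n) x"
  shows "x = x (L n) \<cdot> e (L n) + x (I n) \<cdot> e (I n)"
proof
  fix d
  show "x d = (x (L n) \<cdot> e (L n) + x (I n) \<cdot> e (I n)) d"
  proof (cases "x d = 0")
    case True
    then show ?thesis by (cases d) auto
  next
    case False
    then have "deg d = of_int n"
      using assms by (auto simp: graded_def supp_def)
    then show ?thesis
      by (cases d) (auto simp: of_int_plus_half_neq_of_int)
  qed
qed

lemma graded_of_int_plus_half_eq:
  assumes "graded (of_int n + 1/2) x"
  shows "x = x (G n) \<cdot> e (G n) + x (H n) \<cdot> e (H n)"
proof
  fix d
  show "x d = (x (G n) \<cdot> e (G n) + x (H n) \<cdot> e (H n)) d"
  proof (cases "x d = 0")
    case True
    then show ?thesis by (cases d) auto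
  next
    case False
    then have "deg d = of_int n + 1/2"
      using assms by (auto simp: graded_def supp_def)
    then show ?thesis
      using of_int_plus_half_neq_of_int[of n] by (cases d) (auto simp: of_int_plus_half_neq_of_int[symmetric])
  qed
qed

lemma of_int_plus_half_neq_zero: "(of_int k + 1/2 :: complex) \<noteq> 0"
proof
  assume "(of_int k + 1/2 :: complex) = 0"
  then have "(of_int (2*k+1) :: complex) = of_int 0" by (simp add: field_simps)
  then have "2*k+1 = 0" by (simp only: of_int_eq_iff)
  then show False by presburger
qed

section \<open>Odd superderivations of half-integral degree\<close>

locale odd_superder_of_degree =
  fixes lam :: complex and k :: int and D :: "(bas \<Rightarrow> complex) \<Rightarrow> bas \<Rightarrow> complex"
  assumes superder: "odd_superder lam D"
    and degree: "has_degree (of_int k + 1/2) D"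
begin

lemma D_add [simp]: "x \<in> Lspace \<Longrightarrow> y \<in> Lspace \<Longrightarrow> D (x + y) = D x + D y"
  using superder by (simp add: odd_superder_def)

lemma D_sc [simp]: "x \<in> Lspace \<Longrightarrow> D (c \<cdot> x) = c \<cdot> D x"
  using superder by (simp add: odd_superder_def)

lemma D_brb: "D (brb lam a b) = brk lam (D (e a)) (e b) + (if odd_bas a then -1 else 1) \<cdot> brk lam (e a) (D (e b))"
proof -
  have "homog (odd_bas c) (e c)" for c
    by (simp add: homog_def)
  then show ?thesis
    using superder unfolding odd_superder_def by (metis brk_e_e)
qed

lemma graded_D_e: "graded (deg b + (of_int k + 1/2)) (D (e b))"
  using degree graded_e by (simp add: has_degree_def)

definition "dL_G m = D (e (L m)) (G (m + k))"
definition "dL_H m = D (e (L m)) (H (m + k))"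
definition "dI_G m = D (e (I m)) (G (m + k))"
definition "dI_H m = D (e (I m)) (H (m + k))"
definition "dG_L j = D (e (G j)) (L (j + k + 1))"
definition "dG_I j = D (e (G j)) (I (j + k + 1))"
definition "dH_L j = D (e (H j)) (L (j + k + 1))"
definition "dH_I j = D (e (H j)) (I (j + k + 1))"

lemma D_e_L: "D (e (L m)) = dL_G m \<cdot> e (G (m + k)) + dL_H m \<cdot> e (H (m + k))"
  unfolding dL_G_def dL_H_def
  by (rule graded_of_int_plus_half_eq) (use graded_D_e[of "L m"] in \<open>simp add: ac_simps\<close>)

lemma D_e_I: "D (e (I m)) = dI_G m \<cdot> e (G (m + k)) + dI_H m \<cdot> e (H (m + k))"
  unfolding dI_G_def dI_H_def
  by (rule graded_of_int_plus_half_eq) (use graded_D_e[of "I m"] in \<open>simp add: ac_simps\<close>)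

lemma D_e_G: "D (e (G j)) = dG_L j \<cdot> e (L (j + k + 1)) + dG_I j \<cdot> e (I (j + k + 1))"
  unfolding dG_L_def dG_I_def
  by (rule graded_of_int_eq) (use graded_D_e[of "G j"] in \<open>simp add: ac_simps\<close>)

lemma D_e_H: "D (e (H j)) = dH_L j \<cdot> e (L (j + k + 1)) + dH_I j \<cdot> e (I (j + k + 1))"
  unfolding dH_L_def dH_I_def
  by (rule graded_of_int_eq) (use graded_D_e[of "H j"] in \<open>simp add: ac_simps\<close>)

lemmas D_brb_expand = D_e_L D_e_I D_e_G D_e_H
  brk_add_left brk_add_right brk_sc_left brk_sc_right

lemma dH_eq_zero: "dH_L j = 0" "dH_I j = 0"
proof -
  note rule = fun_cong[OF D_brb[of "L 0" "H j"]]
  have "(of_int k + 1/2) * dH_L j = 0"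
    using rule[of "L (j + k + 1)"] by (simp add: D_brb_expand algebra_simps)
  moreover have "(of_int k + 1/2) * dH_I j = 0"
    using rule[of "I (j + k + 1)"] by (simp add: D_brb_expand algebra_simps)
  ultimately show "dH_L j = 0" "dH_I j = 0"
    using of_int_plus_half_neq_zero by simp_all
qed

definition "coeff_G = dL_G 0 / (of_int k + 1/2)"
definition "coeff_H = (dL_H 0 + coeff_G * lam) / (of_int k + 1/2)"

lemma dG_eq: "dG_L j = 0" "dG_I j = coeff_G"
proof -
  note rule = fun_cong[OF D_brb[of "L 0" "G j"]]
  have "(of_int k + 1/2) * dG_L j = 0"
    using rule[of "L (j + k + 1)"] by (simp add: D_brb_expand dH_eq_zero algebra_simps)
  then show "dG_L j = 0"
    using of_int_plus_half_neq_zero by simp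
  have "(- of_int j - 1/2) * dG_I j = dL_G 0 + dG_I j * (- of_int j - of_int k - 1)"
    using rule[of "I (j + k + 1)"] by (simp add: D_brb_expand dH_eq_zero)
  then have "(of_int k + 1/2) * dG_I j = dL_G 0"
    by (simp add: algebra_simps)
  then show "dG_I j = coeff_G"
    using of_int_plus_half_neq_zero by (simp add: coeff_G_def field_simps)
qed

lemma dL_G_eq: "dL_G m = coeff_G * (of_int k + 1/2 - of_int m / 2)"
proof -
  have "(of_int m / 2 - 1/2) * coeff_G = dL_G m + (of_int m - of_int k - 1) * coeff_G"
    using fun_cong[OF D_brb[of "L m" "G 0"], of "I (m + k + 1)"]
    by (simp add: D_brb_expand dH_eq_zero dG_eq)
  then have "dL_G m = (of_int m / 2 - 1/2) * coeff_G - (of_int m - of_int k - 1) * coeff_G"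
    by simp
  then show ?thesis
    by (simp add: algebra_simps)
qed

lemma dI_eq: "dI_G n = 0" "dI_H n = coeff_G * (2 * of_int k + 1 - of_int n)"
proof -
  note rule = fun_cong[OF D_brb[of "G 0" "G (n - 1)"]]
  show "dI_G n = 0"
    using rule[of "G (n + k)"] by (simp add: D_brb_expand dH_eq_zero dG_eq)
  show "dI_H n = coeff_G * (2 * of_int k + 1 - of_int n)"
    using rule[of "H (n + k)"] by (simp add: D_brb_expand dH_eq_zero dG_eq, simp add: algebra_simps)
qed

lemma dL_H_eq: "dL_H m = - (coeff_G * lam * (of_int m + 1) + coeff_H * (of_int m / 2 - of_int k - 1/2))"
proof -
  have dL_H_0: "dL_H 0 = (of_int k + 1/2) * coeff_H - coeff_G * lam"
    using of_int_plus_half_neq_zero by (simp add: coeff_H_def)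
  have rule: "of_int m * dL_H m = dL_H m * (1/2 - (- of_int m - of_int k)) - dL_G m * lam
      + (dL_G 0 * (lam * (of_int m + 1)) + dL_H 0 * (of_int m / 2 - of_int k - 1/2))"
    using fun_cong[OF D_brb[of "L m" "L 0"], of "H (m + k)"]
    by (simp add: D_brb_expand dH_eq_zero dG_eq)
  have "(of_int k + 1/2) * dL_H m = dL_H m * (1/2 - (- of_int m - of_int k)) - of_int m * dL_H m"
    by (simp add: algebra_simps)
  also have "\<dots> = dL_G m * lam - (dL_G 0 * (lam * (of_int m + 1)) + dL_H 0 * (of_int m / 2 - of_int k - 1/2))"
    unfolding rule by (simp add: algebra_simps)
  also have "\<dots> = (of_int k + 1/2) * - (coeff_G * lam * (of_int m + 1) + coeff_H * (of_int m / 2 - of_int k - 1/2))"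
    unfolding dL_G_eq dL_H_0 by (simp add: field_simps)
  finally show ?thesis
    using of_int_plus_half_neq_zero by simp
qed

lemma D_e_eq_brk: "D (e c) = brk lam (coeff_G \<cdot> e (G k) + coeff_H \<cdot> e (H k)) (e c)"
proof (cases c)
  case (L m)
  then show ?thesis
    by (intro ext) (auto simp: D_brb_expand dL_G_eq dL_H_eq algebra_simps)
next
  case (I m)
  then show ?thesis
    by (intro ext) (auto simp: D_brb_expand dI_eq algebra_simps)
next
  case (G j)
  then show ?thesis
    by (intro ext) (auto simp: D_brb_expand dG_eq algebra_simps)
next
  case (H j)
  then show ?thesis
    by (intro ext) (auto simp: D_brb_expand dH_eq_zero algebra_simps)
qed

lemma D_eq_brk:
  assumes "x \<in> Lspace"
  shows "D x = brk lam (coeff_G \<cdot> e (G k) + coeff_H \<cdot> e (H k)) x"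
proof -
  have "coeff_G \<cdot> e (G k) + coeff_H \<cdot> e (H k) \<in> Lspace"
    by (intro Lspace_add Lspace_sc e_Lspace)
  note z = this
  show ?thesis
    using D_add D_sc brk_add_right[OF _ _ z] brk_sc_right[OF _ z] D_e_eq_brk assms
    by (rule linear_eq_on_Lspace_if_eq_on_basis)
qed

end

theorem lemma2p8:
  fixes lam :: complex and k :: int
    and D :: "(bas \<Rightarrow> complex) \<Rightarrow> (bas \<Rightarrow> complex)"
  assumes "odd_superder lam D"
    and "has_degree (of_int k + 1/2) D"
  shows "\<exists>a b :: complex. \<forall>x\<in>Lspace.
           D x = brk lam (a \<cdot> e (G k) + b \<cdot> e (H k)) x"
proof -
  interpret odd_superder_of_degree lam k D
    using assms by unfold_locales
  show ?thesis
    using D_eq_brk by blast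
qed

end
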